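(* In the setting described in the context, let $g\in\mathcal{G}$ and let $\mathcal{Y}$ and $\widetilde{\mathcal{Y}}$ be two representative sets, with functions $A,\widetilde{A}$ and projectors $P,\widetilde{P}$ respectively, such that $\int A\circ g\,d\mu<\infty$ and $\int \widetilde{A}\circ g\,d\mu<\infty$. Define $\nu=P_\sharp\mu_A$, $g_\star\nu=P_\sharp\big((g_\sharp\mu)_A\big)$, $\widetilde{\nu}=\widetilde{P}_\sharp\mu_{\widetilde{A}}$ and $g_\star\widetilde{\nu}=\widetilde{P}_\sharp\big((g_\sharp\mu)_{\widetilde{A}}\big)$. If $g_\star\nu=\nu$, then $g_\star\widetilde{\nu}=\widetilde{\nu}$.
   Context: Let $(\mathcal{X},\Sigma)$ be a measurable space. A flow on $\mathcal{X}$ is a family $(\Phi^t)_{t\in\mathbb{R}}$ of bijective measurable maps with $\Phi^{t_1}\circ\Phi^{t_2}=\Phi^{t_1+t_2}$, $(x,t)\mapsto\Phi^t(x)$ measurable. $f_\sharp\rho=\rho\circ f^{-1}$ is push-forward; $\rho$ is invariant if $\Phi^t_\sharp\rho=\rho$ for all $t$. Fix a flow $\Phi^t$ and an invariant probability measure $\mu$ on $\mathcal{X}$. Let $h^a$, $a>0$, be bijective measurable maps of $\mathcal{X}$ and $\mathcal{G}$ a group (under composition) of bijective measurable maps of $\mathcal{X}$ such that for all $a,a_1,a_2>0$, $t$, $g\in\mathcal{G}$: $h^{a_1}\circ h^{a_2}=h^{a_1a_2}$, $\Phi^t\circ g=g\circ\Phi^t$, $g\circ h^a=h^a\circ g$,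 $\Phi^t\circ h^a=h^a\circ\Phi^{t/a}$. A set $\mathcal{Y}\subset\mathcal{X}$ is a representative set if for every $x$ there is a unique $a=A(x)>0$ with $h^a(x)\in\mathcal{Y}$, with $A:\mathcal{X}\to(0,\infty)$ measurable and $\int A\,d\mu<\infty$; its projector is $P(x)=h^{A(x)}(x)$. For a measure $\rho$ and positive measurable $B$ with $0<\int B\,d\rho<\infty$, $\rho_B$ is the probability measure with $d\rho_B/d\rho=B/\int B\,d\rho$. The measure $\nu$ is the invariant measure of the normalized flow $P\circ\Phi^\tau_A$ on $\mathcal{Y}$, and $g_\star\nu$ is the analogous normalized measure obtained from the invariant measure $g_\sharp\mu$. *)

theory Defs
  imports "HOL-Probability.Probability"
begin

definition is_flow :: "'a measure \<Rightarrow> (real \<Rightarrow> 'a \<Rightarrow> 'a) \<Rightarrow> bool" where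
  "is_flow M \<Phi> \<longleftrightarrow>
     (\<forall>t. bij_betw (\<Phi> t) (space M) (space M) \<and> \<Phi> t \<in> M \<rightarrow>\<^sub>M M) \<and>
     (\<forall>t1 t2. \<forall>x\<in>space M. \<Phi> t1 (\<Phi> t2 x) = \<Phi> (t1 + t2) x) \<and>
     (\<lambda>(x, t). \<Phi> t x) \<in> M \<Otimes>\<^sub>M borel \<rightarrow>\<^sub>M M"

definition flow_invariant :: "'a measure \<Rightarrow> (real \<Rightarrow> 'a \<Rightarrow> 'a) \<Rightarrow> bool" where
  "flow_invariant \<rho> \<Phi> \<longleftrightarrow> (\<forall>t. distr \<rho> \<rho> (\<Phi> t) = \<rho>)"

definition scaling_structure ::
  "'a measure \<Rightarrow> (real \<Rightarrow> 'a \<Rightarrow> 'a) \<Rightarrow> (real \<Rightarrow> 'a \<Rightarrow> 'a) \<Rightarrow> ('a \<Rightarrow> 'a) set \<Rightarrow> bool" where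
  "scaling_structure M \<Phi> h G \<longleftrightarrow>
     (\<forall>a>0. bij_betw (h a) (space M) (space M) \<and> h a \<in> M \<rightarrow>\<^sub>M M) \<and>
     (\<forall>g\<in>G. bij_betw g (space M) (space M) \<and> g \<in> M \<rightarrow>\<^sub>M M) \<and>
     id \<in> G \<and>
     (\<forall>g1\<in>G. \<forall>g2\<in>G. g1 \<circ> g2 \<in> G) \<and>
     (\<forall>g\<in>G. \<exists>g'\<in>G. \<forall>x\<in>space M. g' (g x) = x \<and> g (g' x) = x) \<and>
     (\<forall>a1>0. \<forall>a2>0. \<forall>x\<in>space M. h a1 (h a2 x) = h (a1 * a2) x) \<and>
     (\<forall>t. \<forall>g\<in>G. \<forall>x\<in>space M. \<Phi> t (g x) = g (\<Phi> t x)) \<and>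
     (\<forall>a>0. \<forall>g\<in>G. \<forall>x\<in>space M. g (h a x) = h a (g x)) \<and>
     (\<forall>a>0. \<forall>t. \<forall>x\<in>space M. \<Phi> t (h a x) = h a (\<Phi> (t / a) x))"

definition representative_set ::
  "'a measure \<Rightarrow> (real \<Rightarrow> 'a \<Rightarrow> 'a) \<Rightarrow> 'a set \<Rightarrow> ('a \<Rightarrow> real) \<Rightarrow> bool" where
  "representative_set M h Y A \<longleftrightarrow>
     Y \<subseteq> space M \<and>
     (\<forall>x\<in>space M. A x > 0 \<and> h (A x) x \<in> Y \<and> (\<forall>a>0. h a x \<in> Y \<longrightarrow> a = A x)) \<and>
     A \<in> borel_measurable M \<and>
     (\<integral>\<^sup>+ x. ennreal (A x) \<partial>M) < \<infinity>"

definition projector :: "(real \<Rightarrow> 'a \<Rightarrow> 'a) \<Rightarrow> ('a \<Rightarrow> real) \<Rightarrow> 'a \<Rightarrow> 'a" where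
  "projector h A x = h (A x) x"

definition normalized_measure :: "'a measure \<Rightarrow> ('a \<Rightarrow> real) \<Rightarrow> 'a measure" where
  "normalized_measure \<rho> B =
     density \<rho> (\<lambda>x. ennreal (B x) / (\<integral>\<^sup>+ y. ennreal (B y) \<partial>\<rho>))"

end

theory Submission
  imports Defs
begin

text \<open>For any probability measure \<open>\<rho>\<close> with \<open>\<integral>A d\<rho>, \<integral>A' d\<rho> < \<infinity>\<close>, the measure
  \<open>P'\<^sub>\<sharp>\<rho>\<^sub>A'\<close> on \<open>Y'\<close> is obtained from the measure \<open>\<nu> = P\<^sub>\<sharp>\<rho>\<^sub>A\<close> on \<open>Y\<close> as
  \<open>P'\<^sub>\<sharp>\<nu>\<^sub>A'\<close>. Indeed, scaling a point by \<open>A x\<close> divides its \<open>A'\<close>-value by \<open>A x\<close>, so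
  \<open>A x \<cdot> A' (P x) = A' x\<close> and \<open>P' \<circ> P = P'\<close>; hence reweighting \<open>\<rho>\<^sub>A\<close> by \<open>A' \<circ> P\<close>
  gives \<open>\<rho>\<^sub>A'\<close> up to normalisation. Applying this to \<open>\<rho> = \<mu>\<close> and \<open>\<rho> = g\<^sub>\<sharp>\<mu>\<close>
  shows that \<open>g\<^sub>\<star>\<nu> = \<nu>\<close> forces \<open>g\<^sub>\<star>\<nu>' = \<nu>'\<close>.\<close>

lemma ennreal_divide_divide_cancel:
  fixes x c d :: ennreal
  assumes "c \<noteq> 0" "c < \<infinity>" "d < \<infinity>"
  shows "x / c / (d / c) = x / d"
proof -
  have "inverse (d / c) = inverse d * c"
    using assms by (cases c) (auto simp: divide_ennreal_def ennreal_inverse_mult inverse_ennreal)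
  moreover have "inverse c * c = 1"
    using assms ennreal_divide_self[of c] by (simp add: divide_ennreal_def mult.commute)
  ultimately show ?thesis
    by (simp add: divide_ennreal_def mult.assoc mult.left_commute[of "inverse c"])
qed

lemma (in prob_space) nn_integral_pos_ne_zero:
  assumes "f \<in> borel_measurable M" and "\<forall>x\<in>space M. 0 < f x"
  shows "(\<integral>\<^sup>+ x. ennreal (f x) \<partial>M) \<noteq> 0"
proof
  assume "(\<integral>\<^sup>+ x. ennreal (f x) \<partial>M) = 0"
  then have "AE x in M. ennreal (f x) = 0"
    using assms(1) by (simp add: nn_integral_0_iff_AE)
  then have "AE x in M. False"
    using AE_space by eventually_elim (use assms(2) in auto)
  then show False
    by (simp add: AE_False)
qed

lemma nn_integral_distr_normalized_measure:
  assumes [measurable]: "A \<in> borel_measurable \<rho>" "P \<in> \<rho> \<rightarrow>\<^sub>M M" "F \<in> borel_measurable M"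
  shows "(\<integral>\<^sup>+ y. F y \<partial>distr (normalized_measure \<rho> A) M P)
    = (\<integral>\<^sup>+ x. ennreal (A x) * F (P x) \<partial>\<rho>) / (\<integral>\<^sup>+ x. ennreal (A x) \<partial>\<rho>)"
  unfolding normalized_measure_def
  by (simp add: nn_integral_distr nn_integral_density ennreal_divide_times ennreal_times_divide
      nn_integral_divide)

lemma emeasure_distr_normalized_measure:
  assumes [measurable]: "A \<in> borel_measurable \<rho>" "P \<in> \<rho> \<rightarrow>\<^sub>M M" "S \<in> sets M"
  shows "emeasure (distr (normalized_measure \<rho> A) M P) S
    = (\<integral>\<^sup>+ x. ennreal (A x) * indicator S (P x) \<partial>\<rho>) / (\<integral>\<^sup>+ x. ennreal (A x) \<partial>\<rho>)"
  using nn_integral_distr_normalized_measure[of A \<rho> P M "indicator S"] by simp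

lemma distr_normalized_measure_factor:
  fixes \<rho> M :: "'a measure" and A A' :: "'a \<Rightarrow> real" and P P' :: "'a \<Rightarrow> 'a"
  assumes sets_eq: "sets \<rho> = sets M"
    and [measurable]: "A \<in> borel_measurable M" "A' \<in> borel_measurable M"
      "P \<in> M \<rightarrow>\<^sub>M M" "P' \<in> M \<rightarrow>\<^sub>M M"
    and A_nonneg: "\<forall>x\<in>space M. 0 \<le> A x"
    and A_ne_zero: "(\<integral>\<^sup>+ x. ennreal (A x) \<partial>\<rho>) \<noteq> 0"
    and A_finite: "(\<integral>\<^sup>+ x. ennreal (A x) \<partial>\<rho>) < \<infinity>"
    and A'_finite: "(\<integral>\<^sup>+ x. ennreal (A' x) \<partial>\<rho>) < \<infinity>"
    and cocycle: "\<forall>x\<in>space M. A x * A' (P x) = A' x"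
    and P'_P: "\<forall>x\<in>space M. P' (P x) = P' x"
  shows "distr (normalized_measure (distr (normalized_measure \<rho> A) M P) A') M P'
    = distr (normalized_measure \<rho> A') M P'"
proof (rule measure_eqI)
  have space_eq: "space \<rho> = space M"
    using sets_eq by (rule sets_eq_imp_space_eq)
  have [measurable]: "A \<in> borel_measurable \<rho>" "A' \<in> borel_measurable \<rho>"
      "P \<in> \<rho> \<rightarrow>\<^sub>M M" "P' \<in> \<rho> \<rightarrow>\<^sub>M M"
    using sets_eq by (simp_all cong: measurable_cong_sets)
  define \<nu> where "\<nu> = distr (normalized_measure \<rho> A) M P"
  define c where "c = (\<integral>\<^sup>+ x. ennreal (A x) \<partial>\<rho>)"
  define c' where "c' = (\<integral>\<^sup>+ x. ennreal (A' x) \<partial>\<rho>)"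
  have reweight: "ennreal (A x) * (ennreal (A' (P x)) * F (P' (P x))) = ennreal (A' x) * F (P' x)"
    if "x \<in> space \<rho>" for x and F :: "'a \<Rightarrow> ennreal"
    using that cocycle P'_P A_nonneg
    by (simp add: space_eq mult.assoc[symmetric] ennreal_mult'[symmetric])
  have "(\<integral>\<^sup>+ y. ennreal (A' y) \<partial>\<nu>) = (\<integral>\<^sup>+ x. ennreal (A x) * ennreal (A' (P x)) \<partial>\<rho>) / c"
    unfolding \<nu>_def c_def by (rule nn_integral_distr_normalized_measure) measurable
  also have "\<dots> = c' / c"
    unfolding c'_def using reweight[where F = "\<lambda>_. 1"] by (simp cong: nn_integral_cong)
  finally have mass: "(\<integral>\<^sup>+ y. ennreal (A' y) \<partial>\<nu>) = c' / c" .
  fix S assume "S \<in> sets (distr (normalized_measure \<nu> A') M P')"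
  then have [measurable]: "S \<in> sets M" by simp
  have "emeasure (distr (normalized_measure \<nu> A') M P') S
      = (\<integral>\<^sup>+ y. ennreal (A' y) * indicator S (P' y) \<partial>\<nu>) / (c' / c)"
    unfolding mass[symmetric] by (rule emeasure_distr_normalized_measure) (simp_all add: \<nu>_def)
  also have "\<dots> = (\<integral>\<^sup>+ x. ennreal (A x) * (ennreal (A' (P x)) * indicator S (P' (P x))) \<partial>\<rho>) / c / (c' / c)"
    unfolding \<nu>_def c_def by (subst nn_integral_distr_normalized_measure) measurable
  also have "\<dots> = (\<integral>\<^sup>+ x. ennreal (A' x) * indicator S (P' x) \<partial>\<rho>) / c'"
    using reweight A_ne_zero A_finite A'_finite
    by (simp add: c_def c'_def ennreal_divide_divide_cancel cong: nn_integral_cong)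
  also have "\<dots> = emeasure (distr (normalized_measure \<rho> A') M P') S"
    unfolding c'_def by (rule emeasure_distr_normalized_measure[symmetric]) simp_all
  finally show "emeasure (distr (normalized_measure \<nu> A') M P') S
      = emeasure (distr (normalized_measure \<rho> A') M P') S" .
qed simp

lemma representative_set_scale:
  assumes ss: "scaling_structure M \<Phi> h G" and Y: "representative_set M h Y A"
    and a: "a > 0" and x: "x \<in> space M"
  shows "A (h a x) * a = A x" and "projector h A (h a x) = projector h A x"
proof -
  have hax: "h a x \<in> space M"
    using ss a x unfolding scaling_structure_def bij_betw_def by auto
  have rep: "\<And>y. y \<in> space M \<Longrightarrow> A y > 0 \<and> h (A y) y \<in> Y \<and> (\<forall>b>0. h b y \<in> Y \<longrightarrow> b = A y)"
    using Y unfolding representative_set_def by blast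
  have compose: "h (A (h a x)) (h a x) = h (A (h a x) * a) x"
    using ss a x rep[OF hax] unfolding scaling_structure_def by blast
  then show scale: "A (h a x) * a = A x"
    using rep[OF hax] rep[OF x] a by (metis mult_pos_pos)
  show "projector h A (h a x) = projector h A x"
    using compose unfolding projector_def scale .
qed

lemma representative_set_measure_factor:
  assumes ss: "scaling_structure M \<Phi> h G"
    and Y: "representative_set M h Y A" and Y': "representative_set M h Y' A'"
    and [measurable]: "projector h A \<in> M \<rightarrow>\<^sub>M M" "projector h A' \<in> M \<rightarrow>\<^sub>M M"
    and \<rho>: "prob_space \<rho>" "sets \<rho> = sets M"
    and A_finite: "(\<integral>\<^sup>+ x. ennreal (A x) \<partial>\<rho>) < \<infinity>"
    and A'_finite: "(\<integral>\<^sup>+ x. ennreal (A' x) \<partial>\<rho>) < \<infinity>"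
  shows "distr (normalized_measure (distr (normalized_measure \<rho> A) M (projector h A)) A') M
      (projector h A') = distr (normalized_measure \<rho> A') M (projector h A')"
proof -
  have A_pos: "\<forall>x\<in>space M. 0 < A x" and [measurable]: "A \<in> borel_measurable M"
    using Y unfolding representative_set_def by auto
  have [measurable]: "A' \<in> borel_measurable M"
    using Y' unfolding representative_set_def by auto
  have "(\<integral>\<^sup>+ x. ennreal (A x) \<partial>\<rho>) \<noteq> 0"
  proof (rule prob_space.nn_integral_pos_ne_zero[OF \<rho>(1)])
    show "A \<in> borel_measurable \<rho>"
      using \<rho>(2) by (simp cong: measurable_cong_sets)
    show "\<forall>x\<in>space \<rho>. 0 < A x"
      using A_pos sets_eq_imp_space_eq[OF \<rho>(2)] by simp
  qed
  moreover have "A x * A' (projector h A x) = A' x"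
    and "projector h A' (projector h A x) = projector h A' x" if "x \<in> space M" for x
    using representative_set_scale[OF ss Y' _ that, of "A x"] A_pos that
    unfolding projector_def by (simp_all add: mult.commute)
  ultimately show ?thesis
    using A_pos A_finite A'_finite
    by (intro distr_normalized_measure_factor[OF \<rho>(2)]) (simp_all add: less_imp_le)
qed

theorem theorem3:
  fixes M :: "'a measure" and \<Phi> h :: "real \<Rightarrow> 'a \<Rightarrow> 'a" and G :: "('a \<Rightarrow> 'a) set"
    and g :: "'a \<Rightarrow> 'a" and Y Y' :: "'a set" and A A' :: "'a \<Rightarrow> real"
  assumes "prob_space M"
    and "is_flow M \<Phi>"
    and "flow_invariant M \<Phi>"
    and "scaling_structure M \<Phi> h G"
    and "g \<in> G"
    and "representative_set M h Y A"
    and "representative_set M h Y' A'"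
    and "projector h A \<in> M \<rightarrow>\<^sub>M M"
    and "projector h A' \<in> M \<rightarrow>\<^sub>M M"
    and "(\<integral>\<^sup>+ x. ennreal (A (g x)) \<partial>M) < \<infinity>"
    and "(\<integral>\<^sup>+ x. ennreal (A' (g x)) \<partial>M) < \<infinity>"
    and "distr (normalized_measure (distr M M g) A) M (projector h A)
           = distr (normalized_measure M A) M (projector h A)"
  shows "distr (normalized_measure (distr M M g) A') M (projector h A')
           = distr (normalized_measure M A') M (projector h A')"
proof -
  have [measurable]: "g \<in> M \<rightarrow>\<^sub>M M" "A \<in> borel_measurable M" "A' \<in> borel_measurable M"
    using assms(4-7) by (auto simp: scaling_structure_def representative_set_def)
  note factor = representative_set_measure_factor[OF assms(4,6,7,8,9)]
  have "distr (normalized_measure (distr M M g) A') M (projector h A')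
      = distr (normalized_measure (distr (normalized_measure (distr M M g) A) M (projector h A)) A')
          M (projector h A')"
  proof (rule factor[symmetric])
    show "prob_space (distr M M g)"
      using assms(1) by (rule prob_space.prob_space_distr) measurable
    show "(\<integral>\<^sup>+ x. ennreal (A x) \<partial>distr M M g) < \<infinity>"
      and "(\<integral>\<^sup>+ x. ennreal (A' x) \<partial>distr M M g) < \<infinity>"
      using assms(10,11) by (simp_all add: nn_integral_distr)
  qed simp
  also have "\<dots> = distr (normalized_measure M A') M (projector h A')"
    unfolding assms(12)
    by (rule factor[OF assms(1) refl]) (use assms(6,7) in \<open>simp_all add: representative_set_def\<close>)
  finally show ?thesis .
qed

end
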